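(* Let $X$ be a finite-dimensional real Hilbert space and $A,B$ nonempty closed convex subsets with $A\cap B\ne\varnothing$. Let $L=\operatorname{aff}(A\cup B)$ and $T=P_BR_A+\mathrm{Id}-P_A$. Then: (a) $T^n=\mathrm{Id}-P_L+T^nP_L$ for all $n\in\mathbb N$; (b) $\mathrm{Id}-T=P_L-TP_L$. If in addition $\operatorname{ri}A\cap\operatorname{ri}B\ne\varnothing$, then (c) $P_{\operatorname{Fix}T}=\mathrm{Id}-P_L+P_{A\cap B}P_L$ and (d) $d_{\operatorname{Fix}T}=d_{A\cap B}\circ P_L$.
   Context: $P_S$ is the metric projection onto a closed convex set $S$, $R_S=2P_S-\mathrm{Id}$, $d_S$ the distance function, $\operatorname{aff}$ the affine hull, $\operatorname{ri}$ the relative interior, $T^0=\mathrm{Id}$. *)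

theory Defs
  imports "HOL-Analysis.Analysis"
begin

text \<open>Metric projection P_S is the library's closest_point S.
  Reflector R_S = 2 P_S - Id.\<close>
definition reflector :: "'a::euclidean_space set \<Rightarrow> 'a \<Rightarrow> 'a" where
  "reflector S x = 2 *\<^sub>R closest_point S x - x"

definition DR_op :: "'a::euclidean_space set \<Rightarrow> 'a set \<Rightarrow> 'a \<Rightarrow> 'a" where
  "DR_op A B x = closest_point B (reflector A x) + x - closest_point A x"

definition Fix :: "('a \<Rightarrow> 'a) \<Rightarrow> 'a set" where
  "Fix T = {x. T x = x}"

end

theory Submission
  imports Defs
begin

text \<open>Every closest-point map onto a subset of the affine set \<open>L = aff (A \<union> B)\<close> commutes with
  translations by vectors orthogonal to \<open>L\<close>; hence so does the Douglas--Rachford operator \<open>T\<close>,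
  and \<open>T\<close> splits into its action on \<open>L\<close> plus the identity on the orthogonal directions, which
  gives (a) and (b). If \<open>ri A \<inter> ri B \<noteq> {}\<close>, a fixed point \<open>x\<close> of \<open>T\<close> has \<open>P\<^sub>A x \<in> B\<close>,
  and \<open>x - P\<^sub>A x\<close> is normal to \<open>A\<close> and its negative normal to \<open>B\<close> at this common point; a
  normal vector at a point of the relative interior is orthogonal to the affine hull, so
  \<open>Fix T = (A \<inter> B) + L\<^sup>\<bottom>\<close>. Projecting onto this orthogonal sum splits into projecting onto
  \<open>A \<inter> B\<close> inside \<open>L\<close> and keeping the \<open>L\<^sup>\<bottom>\<close> component, which gives (c) and (d).\<close>

definition normal_space :: "'a::real_inner set \<Rightarrow> 'a set" where
  "normal_space L = {a - b | a b. a \<in> L \<and> b \<in> L}\<^sup>\<bottom>"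

lemma normal_space_iff: "w \<in> normal_space L \<longleftrightarrow> (\<forall>a\<in>L. \<forall>b\<in>L. w \<bullet> (a - b) = 0)"
  unfolding normal_space_def orthogonal_comp_def orthogonal_def
  by (auto simp: inner_commute[of w])

lemma subspace_normal_space: "subspace (normal_space L)"
  unfolding normal_space_def by (rule subspace_orthogonal_comp)

lemma norm_add_normal_space_squared:
  assumes "w \<in> normal_space L" "a \<in> L" "b \<in> L"
  shows "(norm (w + (a - b)))\<^sup>2 = (norm w)\<^sup>2 + (norm (a - b))\<^sup>2"
proof -
  have "w \<bullet> (a - b) = 0" using assms by (simp add: normal_space_iff)
  then show ?thesis
    by (simp add: power2_norm_eq_inner inner_add_left inner_add_right inner_commute)
qed

lemma closest_point_affine_residual_normal:
  fixes L :: "'a::euclidean_space set"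
  assumes "affine L" "L \<noteq> {}"
  shows "x - closest_point L x \<in> normal_space L"
proof -
  let ?q = "closest_point L x"
  have "closed L" "convex L" using assms affine_closed affine_imp_convex by auto
  then have q: "?q \<in> L" using closest_point_in_set assms(2) by blast
  have orth: "(x - ?q) \<bullet> (y - ?q) = 0" if "y \<in> L" for y
  proof -
    \<comment> \<open>the closest-point inequality applies to \<open>y\<close> and to its mirror image \<open>2 q - y\<close> in \<open>L\<close>\<close>
    have "?q + (-1) *\<^sub>R (y - ?q) \<in> L" using mem_affine_3_minus[OF assms(1) q that q] .
    from closest_point_dot[OF \<open>convex L\<close> \<open>closed L\<close> this, of x]
      closest_point_dot[OF \<open>convex L\<close> \<open>closed L\<close> that, of x]
    show ?thesis by (simp add: inner_diff_right inner_add_right)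
  qed
  show ?thesis unfolding normal_space_iff
  proof (intro ballI)
    fix a b assume "a \<in> L" "b \<in> L"
    then have "(x - ?q) \<bullet> ((a - ?q) - (b - ?q)) = 0" using orth by (simp add: inner_diff_right)
    then show "(x - ?q) \<bullet> (a - b) = 0" by simp
  qed
qed

lemma closest_point_add_normal_space:
  fixes S :: "'a::euclidean_space set"
  assumes "S \<subseteq> L" "closed S" "convex S" "a \<in> S" "w \<in> normal_space L"
  shows "closest_point S (a + w) = a"
proof -
  have "a = closest_point S (a + w)"
  proof (rule closest_point_unique[OF assms(3,2,4)], intro ballI)
    fix z assume "z \<in> S"
    then have "(norm (w + (a - z)))\<^sup>2 = (norm w)\<^sup>2 + (norm (a - z))\<^sup>2"
      using norm_add_normal_space_squared assms by blast
    then have "(norm w)\<^sup>2 \<le> (norm (w + (a - z)))\<^sup>2" by simp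
    then have "norm w \<le> norm (w + (a - z))" by (simp add: power_mono_iff)
    then show "dist (a + w) a \<le> dist (a + w) z" by (simp add: dist_norm algebra_simps)
  qed
  then show ?thesis by simp
qed

lemma closest_point_affine_add_normal_space:
  fixes L :: "'a::euclidean_space set"
  assumes "affine L" "q \<in> L" "w \<in> normal_space L"
  shows "closest_point L (q + w) = q"
  using closest_point_add_normal_space[of L L q w] assms affine_closed affine_imp_convex by blast

lemma closest_point_closest_point_affine:
  fixes S :: "'a::euclidean_space set"
  assumes "affine L" "S \<subseteq> L" "closed S" "convex S" "S \<noteq> {}"
  shows "closest_point S (closest_point L x) = closest_point S x"
proof -
  let ?q = "closest_point L x"
  let ?s = "closest_point S ?q"
  have "L \<noteq> {}" using assms by blast
  then have q: "?q \<in> L" and u: "x - ?q \<in> normal_space L"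
    using closest_point_in_set affine_closed closest_point_affine_residual_normal assms(1) by blast+
  have s: "?s \<in> S" using closest_point_in_set assms by blast
  have "?s = closest_point S x"
  proof (rule closest_point_unique[OF assms(4,3) s], intro ballI)
    fix z assume "z \<in> S"
    have pyth: "(norm (x - y))\<^sup>2 = (norm (x - ?q))\<^sup>2 + (norm (?q - y))\<^sup>2" if "y \<in> S" for y
      using norm_add_normal_space_squared[OF u q, of y] that assms(2) by auto
    have "dist ?q ?s \<le> dist ?q z" using closest_point_le assms(3) \<open>z \<in> S\<close> by blast
    then have "(norm (?q - ?s))\<^sup>2 \<le> (norm (?q - z))\<^sup>2" by (simp add: dist_norm power_mono)
    then have "(norm (x - ?s))\<^sup>2 \<le> (norm (x - z))\<^sup>2" using pyth s \<open>z \<in> S\<close> by simp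
    then show "dist x ?s \<le> dist x z" by (simp add: dist_norm power_mono_iff)
  qed
  then show ?thesis by simp
qed

lemma closest_point_add_normal_space_eq:
  fixes S :: "'a::euclidean_space set"
  assumes "affine L" "S \<subseteq> L" "closed S" "convex S" "S \<noteq> {}" "q \<in> L" "w \<in> normal_space L"
  shows "closest_point S (q + w) = closest_point S q"
  using closest_point_closest_point_affine[OF assms(1-5), of "q + w"]
    closest_point_affine_add_normal_space[OF assms(1,6,7)] by simp

locale convex_sets_in_affine =
  fixes A B L :: "'a::euclidean_space set"
  assumes nonempty: "A \<noteq> {}" "B \<noteq> {}"
    and closed: "closed A" "closed B"
    and convex: "convex A" "convex B"
    and affine: "affine L"
    and subset: "A \<subseteq> L" "B \<subseteq> L"
begin

lemma DR_op_mem: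
  assumes "q \<in> L"
  shows "DR_op A B q \<in> L"
proof -
  have "closest_point A q \<in> L" "closest_point B (reflector A q) \<in> L"
    using closest_point_in_set nonempty closed subset by blast+
  from mem_affine_3_minus[OF affine this(2) assms this(1), of 1]
  show ?thesis by (simp add: DR_op_def algebra_simps)
qed

lemma DR_op_add_normal_space:
  assumes "q \<in> L" "w \<in> normal_space L"
  shows "DR_op A B (q + w) = DR_op A B q + w"
proof -
  let ?a = "closest_point A q"
  have PA: "closest_point A (q + w) = ?a"
    using closest_point_add_normal_space_eq nonempty closed convex affine subset assms by blast
  have "?a \<in> L" using closest_point_in_set nonempty closed subset by blast
  then have "reflector A q \<in> L"
    using mem_affine_3_minus[OF affine \<open>?a \<in> L\<close> \<open>?a \<in> L\<close> assms(1), of 1]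
    by (simp add: reflector_def algebra_simps scaleR_2)
  moreover have "reflector A (q + w) = reflector A q + (- w)"
    by (simp add: reflector_def PA algebra_simps)
  ultimately have "closest_point B (reflector A (q + w)) = closest_point B (reflector A q)"
    using closest_point_add_normal_space_eq[of L B] nonempty closed convex affine subset
      subspace_neg[OF subspace_normal_space assms(2)] by metis
  then show ?thesis by (simp add: DR_op_def PA)
qed

lemma funpow_DR_op_add_normal_space:
  assumes "q \<in> L" "w \<in> normal_space L"
  shows "(DR_op A B ^^ n) (q + w) = (DR_op A B ^^ n) q + w"
proof (induction n)
  case (Suc n)
  have "(DR_op A B ^^ n) q \<in> L" using assms(1) by (induction n) (auto intro: DR_op_mem)
  with Suc show ?case using DR_op_add_normal_space assms(2) by simp
qed simp

lemma funpow_DR_op_decompose: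
  "(DR_op A B ^^ n) x = x - closest_point L x + (DR_op A B ^^ n) (closest_point L x)"
proof -
  have "L \<noteq> {}" using nonempty subset by blast
  then have "closest_point L x \<in> L" "x - closest_point L x \<in> normal_space L"
    using closest_point_in_set affine_closed affine closest_point_affine_residual_normal by blast+
  from funpow_DR_op_add_normal_space[OF this, of n] show ?thesis by (simp add: algebra_simps)
qed

end

lemma normal_cone_rel_interior_orthogonal:
  fixes S :: "'a::euclidean_space set"
  assumes "convex S" "c \<in> rel_interior S" "\<forall>y\<in>S. w \<bullet> (y - c) \<le> 0" "y \<in> S"
  shows "w \<bullet> (y - c) = 0"
proof -
  \<comment> \<open>the segment from \<open>y\<close> through \<open>c\<close> can be prolonged a little beyond \<open>c\<close> inside \<open>S\<close>\<close>
  obtain e where "e > 1" and z: "(1 - e) *\<^sub>R y + e *\<^sub>R c \<in> S"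
    using convex_rel_interior_iff[OF assms(1)] assms(2,4) by blast
  have "(1 - e) *\<^sub>R y + e *\<^sub>R c - c = (1 - e) *\<^sub>R (y - c)" by (simp add: algebra_simps)
  then have "(1 - e) * (w \<bullet> (y - c)) \<le> 0" using assms(3) z by (metis inner_scaleR_right)
  with \<open>e > 1\<close> have "w \<bullet> (y - c) \<ge> 0" by (simp add: mult_le_0_iff)
  with assms(3,4) show ?thesis by force
qed

lemma opposite_normal_cones_normal_space:
  fixes A B :: "'a::euclidean_space set"
  assumes "convex A" "convex B" "c \<in> rel_interior A" "c \<in> rel_interior B"
    and "a \<in> A" "a \<in> B"
    and nA: "\<forall>y\<in>A. w \<bullet> (y - a) \<le> 0" and nB: "\<forall>y\<in>B. w \<bullet> (y - a) \<ge> 0"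
  shows "w \<in> normal_space (affine hull (A \<union> B))"
proof -
  have "c \<in> A" "c \<in> B" using assms(3,4) rel_interior_subset by blast+
  then have wc: "w \<bullet> (c - a) = 0" using nA nB by force
  have "w \<bullet> (y - c) = w \<bullet> (y - a) - w \<bullet> (c - a)" for y by (simp add: inner_diff_right)
  then have "\<forall>y\<in>A. w \<bullet> (y - c) \<le> 0" "\<forall>y\<in>B. (- w) \<bullet> (y - c) \<le> 0"
    using nA nB wc by auto
  then have "\<forall>y\<in>A. w \<bullet> (y - c) = 0" "\<forall>y\<in>B. (- w) \<bullet> (y - c) = 0"
    using normal_cone_rel_interior_orthogonal assms(1-4) by blast+
  then have "A \<union> B \<subseteq> {z. w \<bullet> z = w \<bullet> c}" by (auto simp: inner_diff_right)
  then have "affine hull (A \<union> B) \<subseteq> {z. w \<bullet> z = w \<bullet> c}"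
    by (rule hull_minimal) (rule affine_hyperplane)
  then show ?thesis by (auto simp: normal_space_iff inner_diff_right subset_iff)
qed

lemma DR_op_fixed_point_normal_cones:
  fixes A B :: "'a::euclidean_space set"
  assumes "B \<noteq> {}" "closed A" "convex A" "closed B" "convex B" "DR_op A B x = x"
  defines "a \<equiv> closest_point A x"
  shows "a \<in> B" "\<forall>y\<in>A. (x - a) \<bullet> (y - a) \<le> 0" "\<forall>y\<in>B. (x - a) \<bullet> (y - a) \<ge> 0"
proof -
  have PB: "closest_point B (2 *\<^sub>R a - x) = a"
    using assms(6) by (simp add: DR_op_def reflector_def a_def algebra_simps)
  then show "a \<in> B" using closest_point_in_set[OF assms(4,1)] by metis
  show "\<forall>y\<in>A. (x - a) \<bullet> (y - a) \<le> 0"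
    using closest_point_dot[OF assms(3,2)] unfolding a_def by blast
  show "\<forall>y\<in>B. (x - a) \<bullet> (y - a) \<ge> 0"
  proof
    fix y assume "y \<in> B"
    from closest_point_dot[OF assms(5,4) this, of "2 *\<^sub>R a - x"]
    show "(x - a) \<bullet> (y - a) \<ge> 0" unfolding PB by (simp add: algebra_simps scaleR_2)
  qed
qed

lemma Fix_DR_op:
  fixes A B :: "'a::euclidean_space set"
  assumes "A \<noteq> {}" "closed A" "convex A" "B \<noteq> {}" "closed B" "convex B"
    and "rel_interior A \<inter> rel_interior B \<noteq> {}"
  defines "N \<equiv> normal_space (affine hull (A \<union> B))"
  shows "Fix (DR_op A B) = {a + w | a w. a \<in> A \<inter> B \<and> w \<in> N}"
proof (rule set_eqI, rule iffI)
  fix x assume "x \<in> Fix (DR_op A B)"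
  then have fixed: "DR_op A B x = x" by (simp add: Fix_def)
  obtain c where cA: "c \<in> rel_interior A" and cB: "c \<in> rel_interior B" using assms(7) by blast
  let ?a = "closest_point A x"
  have "?a \<in> A" using closest_point_in_set assms(1,2) by blast
  moreover note normal = DR_op_fixed_point_normal_cones[OF assms(4,2,3,5,6) fixed]
  ultimately have "x - ?a \<in> N"
    unfolding N_def
    by (intro opposite_normal_cones_normal_space[OF assms(3,6) cA cB]) auto
  moreover have "x = ?a + (x - ?a)" by simp
  ultimately show "x \<in> {a + w | a w. a \<in> A \<inter> B \<and> w \<in> N}"
    using \<open>?a \<in> A\<close> normal(1) by blast
next
  fix x assume "x \<in> {a + w | a w. a \<in> A \<inter> B \<and> w \<in> N}"
  then obtain a w where "a \<in> A" "a \<in> B" "w \<in> N" and x: "x = a + w" by blast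
  have sub: "A \<subseteq> affine hull (A \<union> B)" "B \<subseteq> affine hull (A \<union> B)" by (auto intro: hull_inc)
  have PA: "closest_point A x = a"
    using closest_point_add_normal_space[OF sub(1) assms(2,3) \<open>a \<in> A\<close>] \<open>w \<in> N\<close> x N_def by blast
  have "reflector A x = a + (- w)" unfolding reflector_def PA by (simp add: x scaleR_2)
  then have "closest_point B (reflector A x) = a"
    using closest_point_add_normal_space[OF sub(2) assms(5,6) \<open>a \<in> B\<close>]
      subspace_neg[OF subspace_normal_space] \<open>w \<in> N\<close> N_def by metis
  then show "x \<in> Fix (DR_op A B)" by (simp add: Fix_def DR_op_def PA)
qed

lemma orthogonal_sum_eq_vimage:
  fixes C :: "'a::euclidean_space set"
  assumes "affine L" "C \<subseteq> L"
  shows "{a + w | a w. a \<in> C \<and> w \<in> normal_space L} = closest_point L -` C"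
proof (intro set_eqI iffI)
  fix x assume "x \<in> closest_point L -` C"
  moreover have "L \<noteq> {}" using assms \<open>x \<in> _\<close> by auto
  ultimately show "x \<in> {a + w | a w. a \<in> C \<and> w \<in> normal_space L}"
    using closest_point_affine_residual_normal[OF assms(1)]
    by (intro CollectI exI[of _ "closest_point L x"] exI[of _ "x - closest_point L x"]) auto
next
  fix x assume "x \<in> {a + w | a w. a \<in> C \<and> w \<in> normal_space L}"
  then obtain a w where "a \<in> C" "w \<in> normal_space L" "x = a + w" by blast
  then show "x \<in> closest_point L -` C"
    using closest_point_affine_add_normal_space[OF assms(1)] assms(2) by auto
qed

lemma
  fixes C :: "'a::euclidean_space set"
  assumes "affine L" "C \<subseteq> L" "closed C" "convex C" "C \<noteq> {}"
  defines "F \<equiv> {a + w | a w. a \<in> C \<and> w \<in> normal_space L}"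
  shows closest_point_orthogonal_sum:
      "closest_point F x = x - closest_point L x + closest_point C (closest_point L x)"
    and infdist_orthogonal_sum: "infdist x F = infdist (closest_point L x) C"
proof -
  let ?q = "closest_point L x"
  let ?u = "x - ?q"
  let ?c = "closest_point C ?q"
  have "L \<noteq> {}" using assms by blast
  then have q: "?q \<in> L" and u: "?u \<in> normal_space L"
    using closest_point_in_set affine_closed closest_point_affine_residual_normal assms(1) by blast+
  have c: "?c \<in> C" using closest_point_in_set assms(3,5) by blast
  have "F = (\<Union>a\<in>C. \<Union>w\<in>normal_space L. {a + w})" unfolding F_def by blast
  then have "convex F"
    using convex_sums[OF assms(4) subspace_imp_convex[OF subspace_normal_space]] by simp
  have F_vimage: "F = closest_point L -` C" unfolding F_def by (rule orthogonal_sum_eq_vimage[OF assms(1,2)])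
  have "closed F" unfolding F_vimage
    using continuous_closed_vimage[OF assms(3) continuous_at_closest_point]
      affine_closed affine_imp_convex assms(1) \<open>L \<noteq> {}\<close> by metis
  have z: "?c + ?u \<in> F" unfolding F_def using c u by blast
  have dist_split: "(dist x (a + w))\<^sup>2 = (norm (?u - w))\<^sup>2 + (dist ?q a)\<^sup>2"
    if "a \<in> C" "w \<in> normal_space L" for a w
  proof -
    have "x - (a + w) = (?u - w) + (?q - a)" by (simp add: algebra_simps)
    moreover have "?u - w \<in> normal_space L" using subspace_diff[OF subspace_normal_space u that(2)] .
    moreover have "a \<in> L" using that(1) assms(2) by blast
    ultimately show ?thesis using norm_add_normal_space_squared q by (metis dist_norm)
  qed
  have dz: "dist x (?c + ?u) = dist ?q ?c" by (simp add: dist_norm algebra_simps)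
  have "?c + ?u = closest_point F x"
  proof (rule closest_point_unique[OF \<open>convex F\<close> \<open>closed F\<close> z], intro ballI)
    fix y assume "y \<in> F"
    then obtain a w where "a \<in> C" "w \<in> normal_space L" and y: "y = a + w"
      unfolding F_def by blast
    have "(dist ?q ?c)\<^sup>2 \<le> (dist ?q a)\<^sup>2"
      using closest_point_le[OF assms(3) \<open>a \<in> C\<close>] by (simp add: power_mono)
    then have "(dist x (?c + ?u))\<^sup>2 \<le> (dist x y)\<^sup>2"
      unfolding dz y dist_split[OF \<open>a \<in> C\<close> \<open>w \<in> normal_space L\<close>]
      using zero_le_power2[of "norm (?u - w)"] by linarith
    then show "dist x (?c + ?u) \<le> dist x y" by (simp add: power_mono_iff)
  qed
  then show "closest_point F x = x - ?q + ?c" by (simp add: algebra_simps)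
  have "F \<noteq> {}" using z by blast
  then show "infdist x F = infdist ?q C"
    using \<open>closed F\<close> assms(3,5) dz \<open>?c + ?u = closest_point F x\<close>
    by (simp add: infdist_eq_setdist setdist_closest_point)
qed

theorem proposition4p1:
  fixes A B :: "'a::euclidean_space set"
  assumes "A \<noteq> {}" "closed A" "convex A"
    and "B \<noteq> {}" "closed B" "convex B"
    and "A \<inter> B \<noteq> {}"
  defines "L \<equiv> affine hull (A \<union> B)"
    and "T \<equiv> DR_op A B"
  shows "(\<forall>n::nat. \<forall>x. (T ^^ n) x = x - closest_point L x + (T ^^ n) (closest_point L x))
       \<and> (\<forall>x. x - T x = closest_point L x - T (closest_point L x))
       \<and> (rel_interior A \<inter> rel_interior B \<noteq> {} \<longrightarrow>
          (\<forall>x. closest_point (Fix T) x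
               = x - closest_point L x + closest_point (A \<inter> B) (closest_point L x))
          \<and> (\<forall>x. infdist x (Fix T) = infdist (closest_point L x) (A \<inter> B)))"
proof -
  interpret convex_sets_in_affine A B L
    using assms(1-6) by unfold_locales (auto simp: L_def intro: hull_inc)
  have split: "(T ^^ n) x = x - closest_point L x + (T ^^ n) (closest_point L x)" for n x
    unfolding T_def by (rule funpow_DR_op_decompose)
  moreover have "x - T x = closest_point L x - T (closest_point L x)" for x
    using split[of 1 x] by (simp add: algebra_simps)
  moreover have "closest_point (Fix T) x
      = x - closest_point L x + closest_point (A \<inter> B) (closest_point L x)"
    and "infdist x (Fix T) = infdist (closest_point L x) (A \<inter> B)"
    if "rel_interior A \<inter> rel_interior B \<noteq> {}" for x
  proof -
    have C: "A \<inter> B \<subseteq> L" "closed (A \<inter> B)" "convex (A \<inter> B)"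
      using subset closed convex by (auto intro: convex_Int)
    have "Fix T = {a + w | a w. a \<in> A \<inter> B \<and> w \<in> normal_space L}"
      using Fix_DR_op[OF assms(1-6) that] by (simp add: T_def L_def)
    then show "closest_point (Fix T) x
        = x - closest_point L x + closest_point (A \<inter> B) (closest_point L x)"
      and "infdist x (Fix T) = infdist (closest_point L x) (A \<inter> B)"
      using closest_point_orthogonal_sum[OF affine C assms(7)]
        infdist_orthogonal_sum[OF affine C assms(7)] by simp_all
  qed
  ultimately show ?thesis by blast
qed

end
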